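(* Let $\alpha,\beta,\gamma\in\mathbb{Z}[i]$ satisfy $\alpha^2+i\beta^2+\gamma^2=0$, $\alpha\beta\gamma\neq0$, $\gcd(\alpha,\beta)\in U$, and suppose $\beta\equiv 0\pmod{(1+i)^2}$. Then, after multiplying $\alpha,\beta,\gamma$ by suitable units and possibly interchanging the first and third coordinates, one obtains $(X,Y,Z)$ with $X^2+iY^2=Z^2$, $X,Z\in O^I$, $Y=(1+i)^{2+a_1}p_2^{a_2}\cdots p_m^{a_m}$ (integers $a_j\ge0$, $p_j$ distinct Gaussian primes in $O^I$), $\gcd(X,Y)\in U$, $XYZ\neq 0$. Conversely, if $(X,Y,Z)$ satisfies $X^2+iY^2=Z^2$, $\gcd(X,Y)\in U$, $XYZ\ne0$, then $(X,Y,iZ)$ is a solution of $X^2+iY^2+Z^2=0$ with the same conditions.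
   Context: $\mathbb{Z}[i]$ is the ring of Gaussian integers, $U=\{1,-1,i,-i\}$ its unit group; $R(\alpha),I(\alpha)$ are real and imaginary parts. $\gcd(x,y)\in U$ means $x,y$ have no common non-unit divisor. $O=\{\alpha: R(\alpha)+I(\alpha)\equiv1\pmod 2\}$, $O^I=\{\alpha\in O: R(\alpha)\equiv 1\pmod 4\}$. *)

theory Defs
  imports Complex_Main
begin

text \<open>Gaussian integers Z[i] are represented as the complex numbers with integer
  real and imaginary parts.\<close>

definition gauss :: "complex \<Rightarrow> bool" where
  "gauss z \<longleftrightarrow> Re z \<in> \<int> \<and> Im z \<in> \<int>"

definition gdvd :: "complex \<Rightarrow> complex \<Rightarrow> bool" where
  "gdvd a b \<longleftrightarrow> (\<exists>c. gauss c \<and> b = a * c)"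

definition gunits :: "complex set" where
  "gunits = {1, -1, \<i>, -\<i>}"

definition gcd_unit :: "complex \<Rightarrow> complex \<Rightarrow> bool" where
  "gcd_unit x y \<longleftrightarrow> (\<forall>d. gauss d \<and> gdvd d x \<and> gdvd d y \<longrightarrow> d \<in> gunits)"

definition gprime :: "complex \<Rightarrow> bool" where
  "gprime p \<longleftrightarrow> gauss p \<and> p \<noteq> 0 \<and> p \<notin> gunits \<and>
     (\<forall>a b. gauss a \<and> gauss b \<and> gdvd p (a * b) \<longrightarrow> gdvd p a \<or> gdvd p b)"

definition gO :: "complex set" where
  "gO = {z. gauss z \<and> odd (\<lfloor>Re z\<rfloor> + \<lfloor>Im z\<rfloor>)}"

definition gOI :: "complex set" where
  "gOI = {z. z \<in> gO \<and> \<lfloor>Re z\<rfloor> mod 4 = 1}"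

end

theory Submission
  imports Defs
begin

text \<open>Since \<open>(1 + \<i>)\<close> divides \<open>\<beta>\<close> and \<open>gcd(\<alpha>, \<beta>)\<close> is a unit, \<open>\<alpha>\<close> is odd,
  and then so is \<open>\<gamma>\<close> by the equation; hence both have a unique associate in \<open>O\<^sup>I\<close>.
  Writing \<open>\<beta> = (1 + \<i>)\<^sup>2 \<beta>\<^sub>0\<close> and splitting off the powers of \<open>1 + \<i>\<close> from \<open>\<beta>\<^sub>0\<close>, the odd
  part has an associate in \<open>O\<^sup>I\<close>, which is a product of primes of \<open>O\<^sup>I\<close> because \<open>Z[i]\<close> is
  Euclidean. Multiplying by units only changes the signs of the three squares; as squares
  of elements of \<open>O\<^sup>I\<close> have real part \<open>1 mod 4\<close> while \<open>\<i>\<beta>\<^sup>2\<close> has real part \<open>0 mod 4\<close>, the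
  squares of the first and third coordinates must carry opposite signs, and swapping them
  if necessary gives \<open>X\<^sup>2 + \<i>Y\<^sup>2 = Z\<^sup>2\<close>.\<close>

lemma gauss_add [simp]: "gauss a \<Longrightarrow> gauss b \<Longrightarrow> gauss (a + b)"
  and gauss_diff [simp]: "gauss a \<Longrightarrow> gauss b \<Longrightarrow> gauss (a - b)"
  and gauss_uminus [simp]: "gauss a \<Longrightarrow> gauss (- a)"
  and gauss_mult [simp]: "gauss a \<Longrightarrow> gauss b \<Longrightarrow> gauss (a * b)"
  and gauss_cnj [simp]: "gauss a \<Longrightarrow> gauss (cnj a)"
  and gauss_0 [simp]: "gauss 0"
  and gauss_1 [simp]: "gauss 1"
  and gauss_i [simp]: "gauss \<i>"
  and gauss_Complex [simp]: "gauss (Complex (of_int m) (of_int n))"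
  by (auto simp: gauss_def)

lemma gauss_power [simp]: "gauss a \<Longrightarrow> gauss (a ^ n)"
  by (induction n) auto

lemma gaussE:
  assumes "gauss z"
  obtains a b :: int where "z = Complex (of_int a) (of_int b)"
  using assms unfolding gauss_def by (metis Ints_cases complex.exhaust_sel)

lemma Complex_of_int_mult:
  "Complex (of_int a) (of_int b) * Complex (of_int c) (of_int d) =
     Complex (of_int (a * c - b * d)) (of_int (a * d + b * c))"
  by (simp add: complex_mult)

subsection \<open>Divisibility and units\<close>

lemma gdvd_refl [simp]: "gauss a \<Longrightarrow> gdvd a a"
  unfolding gdvd_def by (metis gauss_1 mult_1_right)

lemma gdvd_0 [simp]: "gdvd a 0"
  unfolding gdvd_def by (metis gauss_0 mult_zero_right)

lemma gdvd_triv_left: "gauss c \<Longrightarrow> gdvd a (a * c)"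
  unfolding gdvd_def by blast

lemma gdvd_trans: "gdvd a b \<Longrightarrow> gdvd b c \<Longrightarrow> gdvd a c"
  unfolding gdvd_def by (metis gauss_mult mult.assoc)

lemma gdvd_mult_right: "gdvd a b \<Longrightarrow> gauss c \<Longrightarrow> gdvd a (b * c)"
  unfolding gdvd_def by (metis gauss_mult mult.assoc)

lemma gdvd_mult_left: "gdvd a b \<Longrightarrow> gauss c \<Longrightarrow> gdvd a (c * b)"
  using gdvd_mult_right by (simp add: mult.commute)

lemma gdvd_add: "gdvd a b \<Longrightarrow> gdvd a c \<Longrightarrow> gdvd a (b + c)"
  unfolding gdvd_def by (metis gauss_add distrib_left)

lemma gdvd_uminus: "gdvd a b \<Longrightarrow> gdvd a (- b)"
  unfolding gdvd_def by (metis gauss_uminus mult_minus_right)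

lemma gunits_gauss: "u \<in> gunits \<Longrightarrow> gauss u"
  and gunits_nonzero: "u \<in> gunits \<Longrightarrow> u \<noteq> 0"
  and gunits_cnj_mult: "u \<in> gunits \<Longrightarrow> cnj u * u = 1"
  and gunits_cnj: "u \<in> gunits \<Longrightarrow> cnj u \<in> gunits"
  and gunits_mult: "u \<in> gunits \<Longrightarrow> v \<in> gunits \<Longrightarrow> u * v \<in> gunits"
  and gunits_square: "u \<in> gunits \<Longrightarrow> u\<^sup>2 \<in> {1, -1}"
  and gunits_power_4: "u \<in> gunits \<Longrightarrow> u ^ 4 = 1"
  by (auto simp: gunits_def power2_eq_square power4_eq_xxxx)

lemma gdvd_unit_mult_iff: "u \<in> gunits \<Longrightarrow> gdvd d (u * x) \<longleftrightarrow> gdvd d x"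
  by (metis gdvd_mult_left gunits_cnj_mult gunits_gauss gunits_cnj mult.assoc mult_1)

lemma gdvd_unit_mult_left: "u \<in> gunits \<Longrightarrow> gdvd d x \<Longrightarrow> gdvd (u * d) x"
  unfolding gdvd_def
  by (metis gauss_mult gunits_cnj_mult gunits_gauss gunits_cnj mult.assoc mult.commute mult_1)

lemma gcd_unit_mult_units:
  "gcd_unit x y \<Longrightarrow> u \<in> gunits \<Longrightarrow> v \<in> gunits \<Longrightarrow> gcd_unit (u * x) (v * y)"
  unfolding gcd_unit_def by (simp add: gdvd_unit_mult_iff)

lemma gprime_unit_mult:
  assumes p: "gprime p" and u: "u \<in> gunits"
  shows "gprime (u * p)"
proof -
  have "u * p \<notin> gunits"
  proof
    assume "u * p \<in> gunits"
    then have "cnj u * (u * p) \<in> gunits" using u gunits_cnj gunits_mult by blast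
    with p show False
      by (simp add: gprime_def mult.assoc[symmetric] gunits_cnj_mult[OF u])
  qed
  moreover have "gdvd (u * p) x" if "gdvd p x" for x
    using gdvd_unit_mult_left[OF u that] .
  moreover have "gdvd p x" if "gdvd (u * p) x" for x
  proof -
    have "gdvd p (u * p)" using p u by (simp add: gdvd_mult_left gprime_def gunits_gauss)
    then show ?thesis using that by (rule gdvd_trans)
  qed
  ultimately show ?thesis
    using p u unfolding gprime_def by (metis gauss_mult gunits_gauss gunits_nonzero no_zero_divisors)
qed

subsection \<open>The norm and division with remainder\<close>

definition gnorm :: "complex \<Rightarrow> nat" where
  "gnorm z = nat \<lfloor>(Re z)\<^sup>2 + (Im z)\<^sup>2\<rfloor>"

lemma gnorm_Complex: "gnorm (Complex (of_int a) (of_int b)) = nat (a\<^sup>2 + b\<^sup>2)"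
  unfolding gnorm_def by (metis complex.sel floor_of_int of_int_add of_int_power)

lemma gnorm_eq_cmod_square: "gauss z \<Longrightarrow> real (gnorm z) = (cmod z)\<^sup>2"
  by (elim gaussE) (simp add: gnorm_Complex cmod_power2)

lemma gnorm_mult: "gauss a \<Longrightarrow> gauss b \<Longrightarrow> gnorm (a * b) = gnorm a * gnorm b"
proof -
  assume "gauss a" "gauss b"
  then have "real (gnorm (a * b)) = real (gnorm a * gnorm b)"
    by (simp add: gnorm_eq_cmod_square norm_mult power_mult_distrib)
  then show ?thesis by (simp only: of_nat_eq_iff)
qed

lemma gnorm_eq_0_iff: "gauss z \<Longrightarrow> gnorm z = 0 \<longleftrightarrow> z = 0"
proof -
  assume "gauss z"
  then have "gnorm z = 0 \<longleftrightarrow> (cmod z)\<^sup>2 = 0" by (simp flip: gnorm_eq_cmod_square)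
  then show ?thesis by simp
qed

lemma int_square_le_1: "(a::int)\<^sup>2 \<le> 1 \<Longrightarrow> a \<in> {-1, 0, 1}"
  using power2_le_imp_le[of "\<bar>a\<bar>" 1] by auto

lemma gnorm_eq_1_iff: "gauss z \<Longrightarrow> gnorm z = 1 \<longleftrightarrow> z \<in> gunits"
proof (elim gaussE)
  fix a b :: int
  assume z: "z = Complex (of_int a) (of_int b)"
  have "a\<^sup>2 + b\<^sup>2 = 1 \<longleftrightarrow> (a, b) \<in> {(1, 0), (-1, 0), (0, 1), (0, -1)}"
  proof
    assume sum: "a\<^sup>2 + b\<^sup>2 = 1"
    then have "a\<^sup>2 \<le> 1" "b\<^sup>2 \<le> 1" using zero_le_power2[of a] zero_le_power2[of b] by linarith+
    then show "(a, b) \<in> {(1, 0), (-1, 0), (0, 1), (0, -1)}"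
      using sum int_square_le_1[of a] int_square_le_1[of b] by auto
  qed auto
  also have "\<dots> \<longleftrightarrow> z \<in> gunits"
    unfolding z gunits_def by (auto simp: complex_eq_iff)
  finally show ?thesis unfolding z gnorm_Complex by (simp add: nat_eq_iff)
qed

lemma gauss_division:
  assumes ga: "gauss a" and gb: "gauss b" and b0: "b \<noteq> 0"
  obtains q r where "gauss q" "gauss r" "a = b * q + r" "gnorm r < gnorm b"
proof -
  define w where "w = a / b"
  define q where "q = Complex (of_int (round (Re w))) (of_int (round (Im w)))"
  define r where "r = a - b * q"
  have gq: "gauss q" and gr: "gauss r" using ga gb unfolding q_def r_def by simp_all
  \<comment> \<open>rounding both coordinates of \<open>a / b\<close> leaves an error of modulus at most \<open>1 / \<surd>2\<close>\<close>
  have round: "\<bar>Re (w - q)\<bar> \<le> 1/2" "\<bar>Im (w - q)\<bar> \<le> 1/2"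
    unfolding q_def using of_int_round_abs_le by (simp_all add: abs_minus_commute)
  have "(Re (w - q))\<^sup>2 \<le> 1/4" "(Im (w - q))\<^sup>2 \<le> 1/4"
    using power_mono[OF round(1), of 2] power_mono[OF round(2), of 2] by (simp_all add: power2_eq_square)
  then have err: "(cmod (w - q))\<^sup>2 \<le> 1/2" by (simp add: cmod_power2)
  have "r = b * (w - q)" using b0 unfolding r_def w_def by (simp add: algebra_simps)
  then have "(cmod r)\<^sup>2 = (cmod b)\<^sup>2 * (cmod (w - q))\<^sup>2" by (simp add: norm_mult power_mult_distrib)
  also have "\<dots> \<le> (cmod b)\<^sup>2 * (1/2)" using err by (rule mult_left_mono) simp
  also have "\<dots> < (cmod b)\<^sup>2" using b0 by simp
  finally have "gnorm r < gnorm b" using gr gb by (simp flip: gnorm_eq_cmod_square)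
  then show thesis using that gq gr unfolding r_def by simp
qed

lemma gauss_bezout:
  assumes ga: "gauss a" and gb: "gauss b" and a0: "a \<noteq> 0"
  obtains g x y where "gauss g" "gdvd g a" "gdvd g b" "gauss x" "gauss y" "g = a * x + b * y"
proof -
  define comb where
    "comb n \<longleftrightarrow> (\<exists>x y. gauss x \<and> gauss y \<and> a * x + b * y \<noteq> 0 \<and> gnorm (a * x + b * y) = n)" for n
  have "comb (gnorm a)" unfolding comb_def using a0 by (intro exI[of _ 1] exI[of _ 0]) simp
  then obtain n where "comb n" and least: "\<And>m. m < n \<Longrightarrow> \<not> comb m"
    using exists_least_iff[of comb] by blast
  then obtain x y where xy: "gauss x" "gauss y" "a * x + b * y \<noteq> 0" "gnorm (a * x + b * y) = n"
    unfolding comb_def by blast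
  define g where "g = a * x + b * y"
  have gg: "gauss g" using xy ga gb unfolding g_def by simp
  \<comment> \<open>the remainder of any combination modulo \<open>g\<close> is a combination of smaller norm\<close>
  have dvd_comb: "gdvd g (a * x' + b * y')" if xy': "gauss x'" "gauss y'" for x' y'
  proof -
    obtain q r where qr: "gauss q" "gauss r" "a * x' + b * y' = g * q + r" "gnorm r < gnorm g"
      using gauss_division[of "a * x' + b * y'" g] xy' ga gb gg xy(3) unfolding g_def by auto
    have r: "r = a * (x' - x * q) + b * (y' - y * q)"
      using qr(3) unfolding g_def by (simp add: algebra_simps)
    have "r = 0"
    proof (rule ccontr)
      assume "r \<noteq> 0"
      then have "comb (gnorm r)"
        unfolding comb_def r using xy xy' qr(1) by (intro exI[of _ "x' - x * q"] exI[of _ "y' - y * q"]) simp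
      then show False using least qr(4) xy(4) unfolding g_def by simp
    qed
    then show ?thesis using qr unfolding gdvd_def by auto
  qed
  have "gdvd g a" "gdvd g b" using dvd_comb[of 1 0] dvd_comb[of 0 1] by simp_all
  then show thesis using that gg xy g_def by blast
qed

lemma gprime_if_divisors_trivial:
  assumes gd: "gauss d" and d0: "d \<noteq> 0" and du: "d \<notin> gunits"
    and divisors: "\<And>g. gauss g \<Longrightarrow> gdvd g d \<Longrightarrow> g \<in> gunits \<or> gdvd d g"
  shows "gprime d"
  unfolding gprime_def
proof (intro conjI allI impI)
  fix a b assume ab: "gauss a \<and> gauss b \<and> gdvd d (a * b)"
  show "gdvd d a \<or> gdvd d b"
  proof (cases "gdvd d a")
    case na: False
    obtain g x y where g: "gauss g" "gdvd g d" "gdvd g a" "gauss x" "gauss y" "g = d * x + a * y"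
      using gauss_bezout[OF gd _ d0, of a] ab by blast
    have gu: "g \<in> gunits" using divisors[OF g(1,2)] g(3) na gdvd_trans by blast
    have "b = cnj g * (g * b)" using gunits_cnj_mult[OF gu] by (simp add: mult.assoc[symmetric])
    also have "g * b = d * (x * b) + (a * b) * y" using g(6) by (simp add: algebra_simps)
    finally have b: "cnj g * (d * (x * b) + (a * b) * y) = b" ..
    have "gdvd d (d * (x * b) + (a * b) * y)"
      using ab g by (intro gdvd_add gdvd_triv_left gdvd_mult_right[of d "a * b"]) simp_all
    then have "gdvd d (cnj g * (d * (x * b) + (a * b) * y))"
      using gu by (simp add: gdvd_mult_left gunits_gauss gunits_cnj)
    then show ?thesis unfolding b ..
  qed simp
qed (use assms in auto)

lemma gprime_divisor_exists:
  assumes gz: "gauss z" and z0: "z \<noteq> 0" and zu: "z \<notin> gunits"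
  obtains p where "gprime p" "gdvd p z"
proof -
  define nonunit_divisor where
    "nonunit_divisor n \<longleftrightarrow> (\<exists>d. gauss d \<and> gdvd d z \<and> d \<notin> gunits \<and> gnorm d = n)" for n
  have "nonunit_divisor (gnorm z)" unfolding nonunit_divisor_def using gz zu by auto
  then obtain n where "nonunit_divisor n" and least: "\<And>m. m < n \<Longrightarrow> \<not> nonunit_divisor m"
    using exists_least_iff[of nonunit_divisor] by blast
  then obtain d where d: "gauss d" "gdvd d z" "d \<notin> gunits" "gnorm d = n"
    unfolding nonunit_divisor_def by blast
  have d0: "d \<noteq> 0" using d(2) z0 by (auto simp: gdvd_def)
  \<comment> \<open>a non-unit divisor of \<open>d\<close> has minimal norm, so its cofactor is a unit\<close>
  have "g \<in> gunits \<or> gdvd d g" if g: "gauss g" "gdvd g d" for g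
  proof (cases "g \<in> gunits")
    case gu: False
    obtain c where c: "gauss c" "d = g * c" using g(2) by (auto simp: gdvd_def)
    have "\<not> gnorm g < n" using least[of "gnorm g"] gu g gdvd_trans[OF g(2) d(2)]
      unfolding nonunit_divisor_def by blast
    moreover have "gnorm d = gnorm g * gnorm c" "gnorm d \<noteq> 0"
      using c g(1) d(1) d0 by (simp_all add: gnorm_mult gnorm_eq_0_iff)
    ultimately have "gnorm g * gnorm c \<le> gnorm g * 1" "gnorm c \<noteq> 0" "gnorm g \<noteq> 0"
      using d(4) by simp_all
    then have "gnorm c = 1" by simp
    then have "c \<in> gunits" using gnorm_eq_1_iff c(1) by simp
    then have "g = cnj c * d" using c(2) gunits_cnj_mult by (simp add: algebra_simps)
    then show ?thesis using gdvd_triv_left[of "cnj c" d] c(1) by (simp add: mult.commute)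
  qed simp
  then have "gprime d" using gprime_if_divisors_trivial d(1,3) d0 by blast
  then show thesis using that d(2) by blast
qed

subsection \<open>Parity and the normalized elements \<open>O\<^sup>I\<close>\<close>

lemma gdvd_1_plus_i_Complex_iff: "gdvd (1 + \<i>) (Complex (of_int a) (of_int b)) \<longleftrightarrow> even (a + b)"
proof
  assume "gdvd (1 + \<i>) (Complex (of_int a) (of_int b))"
  then obtain c where c: "gauss c" "Complex (of_int a) (of_int b) = (1 + \<i>) * c"
    by (auto simp: gdvd_def)
  from c(1) obtain p q :: int where "c = Complex (of_int p) (of_int q)" by (rule gaussE)
  with c(2) have "a = p - q" "b = p + q" by (simp_all add: complex_eq_iff flip: of_int_diff of_int_add)
  then show "even (a + b)" by simp
next
  assume "even (a + b)"
  then obtain k where "a + b = 2 * k" by blast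
  then have "Complex (of_int a) (of_int b) = (1 + \<i>) * Complex (of_int k) (of_int (k - a))"
    by (simp add: complex_eq_iff)
  then show "gdvd (1 + \<i>) (Complex (of_int a) (of_int b))"
    unfolding gdvd_def using gauss_Complex by blast
qed

lemma not_gdvd_1_plus_i_mult:
  assumes "gauss x" "gauss y" "\<not> gdvd (1 + \<i>) x" "\<not> gdvd (1 + \<i>) y"
  shows "\<not> gdvd (1 + \<i>) (x * y)"
proof -
  obtain a b c d :: int
    where x: "x = Complex (of_int a) (of_int b)" and y: "y = Complex (of_int c) (of_int d)"
    using assms(1,2) by (elim gaussE) blast
  have "odd (a + b)" "odd (c + d)" using assms(3,4) unfolding x y gdvd_1_plus_i_Complex_iff .
  then have "odd ((a + b) * (c + d) - 2 * (b * d))" by simp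
  also have "(a + b) * (c + d) - 2 * (b * d) = a * c - b * d + (a * d + b * c)"
    by (simp add: algebra_simps)
  finally show ?thesis unfolding x y Complex_of_int_mult gdvd_1_plus_i_Complex_iff .
qed

lemma gOI_Complex_iff: "Complex (of_int a) (of_int b) \<in> gOI \<longleftrightarrow> odd (a + b) \<and> a mod 4 = 1"
  unfolding gOI_def gO_def by simp

lemma gOI_gauss: "x \<in> gOI \<Longrightarrow> gauss x"
  by (simp add: gOI_def gO_def)

lemma gOI_not_gdvd_1_plus_i: "x \<in> gOI \<Longrightarrow> \<not> gdvd (1 + \<i>) x"
proof -
  assume x: "x \<in> gOI"
  obtain a b :: int where "x = Complex (of_int a) (of_int b)" using gOI_gauss[OF x] by (rule gaussE)
  with x show ?thesis by (simp add: gOI_Complex_iff gdvd_1_plus_i_Complex_iff)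
qed

lemma gOI_nonzero: "x \<in> gOI \<Longrightarrow> x \<noteq> 0"
  using gOI_not_gdvd_1_plus_i by fastforce

lemma one_in_gOI: "1 \<in> gOI"
  using gOI_Complex_iff[of 1 0] by (simp add: one_complex.code)

lemma gOI_unit_associate:
  assumes "gauss z" "\<not> gdvd (1 + \<i>) z"
  obtains u where "u \<in> gunits" "u * z \<in> gOI"
proof -
  obtain a b :: int where z: "z = Complex (of_int a) (of_int b)" using assms(1) by (rule gaussE)
  have odd: "odd (a + b)" using assms(2) unfolding z gdvd_1_plus_i_Complex_iff .
  have assoc: "1 * z = Complex (of_int a) (of_int b)" "- 1 * z = Complex (of_int (- a)) (of_int (- b))"
    "- \<i> * z = Complex (of_int b) (of_int (- a))" "\<i> * z = Complex (of_int (- b)) (of_int a)"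
    by (simp_all add: z complex_eq_iff)
  have units: "1 \<in> gunits" "- 1 \<in> gunits" "- \<i> \<in> gunits" "\<i> \<in> gunits"
    by (simp_all add: gunits_def)
  \<comment> \<open>one of \<open>a, -a, b, -b\<close> is \<open>1 mod 4\<close>, since \<open>a + b\<close> is odd\<close>
  have "a mod 4 = 1 \<or> (- a) mod 4 = 1 \<or> b mod 4 = 1 \<or> (- b) mod 4 = 1"
    using odd by presburger
  moreover have "odd (- a + - b)" "odd (b + - a)" "odd (- b + a)" using odd by presburger+
  ultimately show thesis
    using that[OF units(1)] that[OF units(2)] that[OF units(3)] that[OF units(4)] odd
    unfolding assoc gOI_Complex_iff by blast
qed

lemma gOI_unit_mult_unique:
  assumes x: "x \<in> gOI" and u: "u \<in> gunits" and ux: "u * x \<in> gOI"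
  shows "u = 1"
proof -
  obtain a b :: int where z: "x = Complex (of_int a) (of_int b)" using gOI_gauss[OF x] by (rule gaussE)
  have ab: "odd (a + b)" "a mod 4 = 1" using x unfolding z gOI_Complex_iff by simp_all
  have assoc: "- 1 * x = Complex (of_int (- a)) (of_int (- b))"
    "- \<i> * x = Complex (of_int b) (of_int (- a))" "\<i> * x = Complex (of_int (- b)) (of_int a)"
    by (simp_all add: z complex_eq_iff)
  have "- 1 * x \<notin> gOI" "- \<i> * x \<notin> gOI" "\<i> * x \<notin> gOI"
    unfolding assoc gOI_Complex_iff using ab by presburger+
  with u ux show ?thesis by (auto simp: gunits_def)
qed

lemma gOI_mult: "x \<in> gOI \<Longrightarrow> y \<in> gOI \<Longrightarrow> x * y \<in> gOI"
proof -
  assume x: "x \<in> gOI" and y: "y \<in> gOI"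
  obtain a b c d :: int
    where xe: "x = Complex (of_int a) (of_int b)" and ye: "y = Complex (of_int c) (of_int d)"
    using gOI_gauss[OF x] gOI_gauss[OF y] by (elim gaussE) blast
  have "odd (a + b)" "a mod 4 = 1" "odd (c + d)" "c mod 4 = 1"
    using x y unfolding xe ye gOI_Complex_iff by simp_all
  then have "a = 4 * (a div 4) + 1" "b = 2 * (b div 2)" "c = 4 * (c div 4) + 1" "d = 2 * (d div 2)"
    by presburger+
  then obtain k l m n where "a = 4 * k + 1" "b = 2 * l" "c = 4 * m + 1" "d = 2 * n"
    by blast
  then have "a * c - b * d = 4 * (4 * k * m + k + m - l * n) + 1" "a * d + b * c = 2 * ((4 * k + 1) * n + l * (4 * m + 1))"
    by (simp_all add: algebra_simps)
  then have "odd (a * c - b * d + (a * d + b * c))" "(a * c - b * d) mod 4 = 1" by presburger+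
  then show ?thesis unfolding xe ye Complex_of_int_mult gOI_Complex_iff by simp
qed

lemma gOI_Re_square_mod_4: "x \<in> gOI \<Longrightarrow> \<exists>k::int. Re (x\<^sup>2) = of_int (4 * k + 1)"
proof -
  assume x: "x \<in> gOI"
  obtain a b :: int where xe: "x = Complex (of_int a) (of_int b)" using gOI_gauss[OF x] by (rule gaussE)
  have "odd (a + b)" "a mod 4 = 1" using x unfolding xe gOI_Complex_iff by simp_all
  then have "a = 4 * (a div 4) + 1" "b = 2 * (b div 2)" by presburger+
  then obtain k l where "a = 4 * k + 1" "b = 2 * l" by blast
  then have "a * a - b * b = 4 * (4 * k * k + 2 * k - l * l) + 1" by (simp add: algebra_simps)
  moreover have "Re (x\<^sup>2) = of_int (a * a - b * b)" unfolding xe power2_eq_square Complex_of_int_mult by simp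
  ultimately show ?thesis by metis
qed

subsection \<open>Factorization into primes of \<open>O\<^sup>I\<close>\<close>

definition gOI_prime_product :: "complex \<Rightarrow> bool" where
  "gOI_prime_product q \<longleftrightarrow>
     (\<exists>P (e :: complex \<Rightarrow> nat). finite P \<and> (\<forall>p\<in>P. gprime p \<and> p \<in> gOI) \<and> q = (\<Prod>p\<in>P. p ^ e p))"

lemma gOI_prime_product_1: "gOI_prime_product 1"
  unfolding gOI_prime_product_def by (intro exI[of _ "{}"]) simp

lemma gOI_prime_product_mult_prime:
  assumes p: "gprime p" "p \<in> gOI" and r: "gOI_prime_product r"
  shows "gOI_prime_product (p * r)"
proof -
  obtain P e where P: "finite P" "\<forall>q\<in>P. gprime q \<and> q \<in> gOI" "r = (\<Prod>q\<in>P. q ^ e q)"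
    using r unfolding gOI_prime_product_def by blast
  define e' where "e' = e(p := Suc (if p \<in> P then e p else 0))"
  have "(\<Prod>q\<in>insert p P. q ^ e' q) = p ^ e' p * (\<Prod>q\<in>P - {p}. q ^ e q)"
    using P(1) by (simp add: prod.insert_remove e'_def)
  also have "\<dots> = p * ((if p \<in> P then p ^ e p else 1) * (\<Prod>q\<in>P - {p}. q ^ e q))"
    by (simp add: e'_def)
  also have "\<dots> = p * r"
    using P(1,3) by (simp add: prod.remove)
  finally show ?thesis
    unfolding gOI_prime_product_def using P(1,2) p by (intro exI[of _ "insert p P"] exI[of _ e']) auto
qed

lemma gOI_cofactor:
  assumes p: "p \<in> gOI" and r: "gauss r" and pr: "p * r \<in> gOI"
  shows "r \<in> gOI"
proof -
  have "\<not> gdvd (1 + \<i>) r"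
    using gOI_not_gdvd_1_plus_i[OF pr] gdvd_mult_left[of "1 + \<i>" r p] gOI_gauss[OF p] by blast
  with r obtain w where w: "w \<in> gunits" "w * r \<in> gOI" by (rule gOI_unit_associate)
  have "w * (p * r) \<in> gOI" using gOI_mult[OF p w(2)] by (simp add: algebra_simps)
  then have "w = 1" using gOI_unit_mult_unique[OF pr w(1)] by simp
  then show ?thesis using w(2) by simp
qed

lemma gOI_prime_divisor_exists:
  assumes q: "q \<in> gOI" and qu: "q \<notin> gunits"
  obtains p r where "gprime p" "p \<in> gOI" "r \<in> gOI" "q = p * r"
proof -
  obtain p where p: "gprime p" "gdvd p q"
    using gprime_divisor_exists[OF gOI_gauss[OF q] gOI_nonzero[OF q] qu] .
  obtain c where c: "gauss c" "q = p * c" using p(2) by (auto simp: gdvd_def)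
  have gp: "gauss p" using p(1) by (simp add: gprime_def)
  have "\<not> gdvd (1 + \<i>) p" using gOI_not_gdvd_1_plus_i[OF q] c gdvd_mult_right by blast
  with gp obtain u where u: "u \<in> gunits" "u * p \<in> gOI" by (rule gOI_unit_associate)
  have "q = (u * p) * (cnj u * c)" using c(2) gunits_cnj_mult[OF u(1)] by (simp add: algebra_simps)
  moreover have "cnj u * c \<in> gOI"
    using gOI_cofactor[OF u(2)] calculation q c(1) gunits_gauss[OF gunits_cnj[OF u(1)]] by simp
  ultimately show thesis using that gprime_unit_mult[OF p(1) u(1)] u(2) by blast
qed

lemma gOI_prime_factorization: "q \<in> gOI \<Longrightarrow> gOI_prime_product q"
proof (induction "gnorm q" arbitrary: q rule: less_induct)
  case less
  show ?case
  proof (cases "q \<in> gunits")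
    case True
    then have "q = 1" using gOI_unit_mult_unique[OF one_in_gOI] less.prems by simp
    then show ?thesis by (simp add: gOI_prime_product_1)
  next
    case False
    with less.prems obtain p r where pr: "gprime p" "p \<in> gOI" "r \<in> gOI" "q = p * r"
      by (rule gOI_prime_divisor_exists)
    have gp: "gauss p" "p \<noteq> 0" "p \<notin> gunits" using pr(1) by (auto simp: gprime_def)
    have gr: "gauss r" "r \<noteq> 0" using pr(3) gOI_gauss gOI_nonzero by auto
    have "gnorm p \<noteq> 0" "gnorm p \<noteq> 1" "gnorm r \<noteq> 0"
      using gp gr gnorm_eq_0_iff gnorm_eq_1_iff by auto
    moreover have "gnorm q = gnorm p * gnorm r" using pr(4) gp(1) gr(1) by (simp add: gnorm_mult)
    ultimately have "gnorm r < gnorm q" by (simp add: less_Suc_eq_0_disj)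
    then show ?thesis
      using less.hyps pr gOI_prime_product_mult_prime by blast
  qed
qed

lemma split_off_1_plus_i:
  "gauss z \<Longrightarrow> z \<noteq> 0 \<Longrightarrow> \<exists>k q. gauss q \<and> \<not> gdvd (1 + \<i>) q \<and> z = (1 + \<i>) ^ k * q"
proof (induction "gnorm z" arbitrary: z rule: less_induct)
  case less
  show ?case
  proof (cases "gdvd (1 + \<i>) z")
    case False
    then show ?thesis using less.prems by (intro exI[of _ 0] exI[of _ z]) simp
  next
    case True
    then obtain c where c: "gauss c" "z = (1 + \<i>) * c" by (auto simp: gdvd_def)
    have "c \<noteq> 0" using c less.prems by auto
    moreover have "gnorm z = 2 * gnorm c"
      using c by (simp add: gnorm_mult) (simp add: gnorm_def)
    ultimately have "gnorm c < gnorm z" using gnorm_eq_0_iff[OF c(1)] by simp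
    then obtain k q where "gauss q" "\<not> gdvd (1 + \<i>) q" "c = (1 + \<i>) ^ k * q"
      using less.hyps c(1) \<open>c \<noteq> 0\<close> by blast
    then show ?thesis using c by (intro exI[of _ "Suc k"] exI[of _ q]) (simp add: mult.assoc)
  qed
qed

lemma gauss_factorization:
  assumes "gauss z" "z \<noteq> 0"
  obtains c k q where "c \<in> gunits" "gOI_prime_product q" "c * z = (1 + \<i>) ^ k * q"
proof -
  obtain k q where q: "gauss q" "\<not> gdvd (1 + \<i>) q" "z = (1 + \<i>) ^ k * q"
    using split_off_1_plus_i[OF assms] by blast
  obtain c where c: "c \<in> gunits" "c * q \<in> gOI" using q(1,2) by (rule gOI_unit_associate)
  have "c * z = (1 + \<i>) ^ k * (c * q)" using q(3) by (simp add: algebra_simps)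
  then show thesis using that c(1) gOI_prime_factorization[OF c(2)] by blast
qed

subsection \<open>Solutions of \<open>\<alpha>\<^sup>2 + \<i>\<beta>\<^sup>2 + \<gamma>\<^sup>2 = 0\<close>\<close>

lemma common_divisor_dvd_square:
  assumes g: "gauss \<beta>" "gauss \<gamma>" and eq: "\<alpha>\<^sup>2 + \<i> * \<beta>\<^sup>2 + \<gamma>\<^sup>2 = 0"
    and d: "gdvd d \<beta>" "gdvd d \<gamma>"
  shows "gdvd d (\<alpha> * \<alpha>)"
proof -
  have "gdvd d (- (\<i> * (\<beta> * \<beta>) + \<gamma> * \<gamma>))"
    using d g by (intro gdvd_uminus gdvd_add gdvd_mult_left gdvd_mult_right) simp_all
  moreover have "- (\<i> * (\<beta> * \<beta>) + \<gamma> * \<gamma>) = \<alpha> * \<alpha>"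
    using eq by (simp add: power2_eq_square add_eq_0_iff add.assoc)
  ultimately show ?thesis by simp
qed

lemma gcd_unit_third_coordinate:
  assumes g: "gauss \<alpha>" "gauss \<beta>" "gauss \<gamma>" and eq: "\<alpha>\<^sup>2 + \<i> * \<beta>\<^sup>2 + \<gamma>\<^sup>2 = 0"
    and \<beta>0: "\<beta> \<noteq> 0" and cop: "gcd_unit \<alpha> \<beta>"
  shows "gcd_unit \<gamma> \<beta>"
  unfolding gcd_unit_def
proof (intro allI impI)
  fix d assume d: "gauss d \<and> gdvd d \<gamma> \<and> gdvd d \<beta>"
  show "d \<in> gunits"
  proof (rule ccontr)
    assume "d \<notin> gunits"
    moreover have "d \<noteq> 0" using d \<beta>0 by (auto simp: gdvd_def)
    ultimately obtain p where p: "gprime p" "gdvd p d"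
      using d gprime_divisor_exists by blast
    then have "gdvd p \<beta>" "gdvd p \<gamma>" using d gdvd_trans by blast+
    then have "gdvd p (\<alpha> * \<alpha>)" using common_divisor_dvd_square g eq by blast
    then have "gdvd p \<alpha>" using p(1) g(1) unfolding gprime_def by blast
    then have "p \<in> gunits" using cop \<open>gdvd p \<beta>\<close> p(1) unfolding gcd_unit_def gprime_def by blast
    then show False using p(1) unfolding gprime_def by blast
  qed
qed

text \<open>The real part of \<open>X\<^sup>2 + \<delta> Z\<^sup>2\<close> is \<open>1 + \<delta> mod 4\<close>, that of \<open>\<epsilon>\<i>Y\<^sup>2\<close> is \<open>0 mod 4\<close>.\<close>

lemma gOI_square_sign:
  assumes X: "X \<in> gOI" and Z: "Z \<in> gOI" and Y: "gdvd ((1 + \<i>)\<^sup>2) Y"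
    and \<epsilon>: "\<epsilon> \<in> {1, -1}" and \<delta>: "\<delta> \<in> {1, -1}"
    and eq: "X\<^sup>2 + \<epsilon> * \<i> * Y\<^sup>2 + \<delta> * Z\<^sup>2 = 0"
  shows "\<delta> = -1"
proof (rule ccontr)
  assume "\<delta> \<noteq> -1"
  with \<delta> have "\<delta> = 1" by simp
  obtain Y0 where Y0: "gauss Y0" "Y = (1 + \<i>)\<^sup>2 * Y0" using Y by (auto simp: gdvd_def)
  have "(1 + \<i>)\<^sup>2 = 2 * \<i>" by (simp add: power2_eq_square algebra_simps)
  then have "Y\<^sup>2 = - 4 * Y0\<^sup>2" unfolding Y0(2) by (simp add: power_mult_distrib)
  then have "X\<^sup>2 + Z\<^sup>2 - 4 * (\<epsilon> * \<i> * Y0\<^sup>2) = 0"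
    using eq \<open>\<delta> = 1\<close> by (simp add: algebra_simps)
  then have "X\<^sup>2 + Z\<^sup>2 = 4 * (\<epsilon> * \<i> * Y0\<^sup>2)" by simp
  then have "Re (X\<^sup>2) + Re (Z\<^sup>2) = Re (4 * (\<epsilon> * \<i> * Y0\<^sup>2))"
    by (metis plus_complex.sel(1))
  also have "\<dots> = 4 * Re (\<epsilon> * \<i> * Y0\<^sup>2)" by simp
  finally have "Re (X\<^sup>2) + Re (Z\<^sup>2) = 4 * Re (\<epsilon> * \<i> * Y0\<^sup>2)" .
  moreover have "gauss (\<epsilon> * \<i> * Y0\<^sup>2)" using \<epsilon> Y0(1) by auto
  then obtain m :: int where "Re (\<epsilon> * \<i> * Y0\<^sup>2) = of_int m" by (auto simp: gauss_def elim: Ints_cases)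
  moreover obtain k l :: int where "Re (X\<^sup>2) = of_int (4 * k + 1)" "Re (Z\<^sup>2) = of_int (4 * l + 1)"
    using gOI_Re_square_mod_4 X Z by blast
  ultimately have "of_int ((4 * k + 1) + (4 * l + 1)) = (of_int (4 * m) :: real)" by simp
  then have "(4 * k + 1) + (4 * l + 1) = 4 * m" by (simp only: of_int_eq_iff)
  then show False by presburger
qed

definition normalized_solution :: "complex \<Rightarrow> complex \<Rightarrow> complex \<Rightarrow> bool" where
  "normalized_solution X Y Z \<longleftrightarrow>
     X\<^sup>2 + \<i> * Y\<^sup>2 = Z\<^sup>2 \<and> X \<in> gOI \<and> Z \<in> gOI \<and>
     (\<exists>(a1::nat) (P::complex set) (e::complex \<Rightarrow> nat).
        finite P \<and> (\<forall>p\<in>P. gprime p \<and> p \<in> gOI) \<and> Y = (1 + \<i>) ^ (2 + a1) * (\<Prod>p\<in>P. p ^ e p)) \<and>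
     gcd_unit X Y \<and> X * Y * Z \<noteq> 0"

lemma normalized_solution_by_units:
  assumes g: "gauss \<alpha>" "gauss \<beta>" "gauss \<gamma>" and eq: "\<alpha>\<^sup>2 + \<i> * \<beta>\<^sup>2 + \<gamma>\<^sup>2 = 0"
    and nz: "\<alpha> * \<beta> * \<gamma> \<noteq> 0" and cop: "gcd_unit \<alpha> \<beta>" and even: "gdvd ((1 + \<i>)\<^sup>2) \<beta>"
  shows "\<exists>u v w \<alpha>' \<gamma>'. u \<in> gunits \<and> v \<in> gunits \<and> w \<in> gunits \<and>
           (\<alpha>', \<gamma>') \<in> {(\<alpha>, \<gamma>), (\<gamma>, \<alpha>)} \<and> normalized_solution (u * \<alpha>') (v * \<beta>) (w * \<gamma>')"
proof -
  obtain \<beta>\<^sub>0 where \<beta>\<^sub>0: "gauss \<beta>\<^sub>0" "\<beta> = (1 + \<i>)\<^sup>2 * \<beta>\<^sub>0" using even by (auto simp: gdvd_def)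
  have "gdvd (1 + \<i>) \<beta>"
    using \<beta>\<^sub>0 gdvd_triv_left[of "(1 + \<i>) * \<beta>\<^sub>0" "1 + \<i>"] by (simp add: power2_eq_square mult.assoc)
  moreover have "1 + \<i> \<notin> gunits" by (auto simp: gunits_def complex_eq_iff)
  ultimately have odd_\<alpha>: "\<not> gdvd (1 + \<i>) \<alpha>" using cop unfolding gcd_unit_def by auto
  then have odd_\<gamma>: "\<not> gdvd (1 + \<i>) \<gamma>"
    using common_divisor_dvd_square[OF g(2,3) eq \<open>gdvd (1 + \<i>) \<beta>\<close>] not_gdvd_1_plus_i_mult g(1) by blast
  obtain u where u: "u \<in> gunits" "u * \<alpha> \<in> gOI" using g(1) odd_\<alpha> by (rule gOI_unit_associate)
  obtain w where w: "w \<in> gunits" "w * \<gamma> \<in> gOI" using g(3) odd_\<gamma> by (rule gOI_unit_associate)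
  have "\<beta>\<^sub>0 \<noteq> 0" using nz \<beta>\<^sub>0(2) by auto
  with \<beta>\<^sub>0(1) obtain c k q where c: "c \<in> gunits" "gOI_prime_product q" "c * \<beta>\<^sub>0 = (1 + \<i>) ^ k * q"
    by (rule gauss_factorization)
  define X Y Z where "X = u * \<alpha>" and "Y = c * \<beta>" and "Z = w * \<gamma>"
  have "Y = (1 + \<i>)\<^sup>2 * (c * \<beta>\<^sub>0)" unfolding Y_def \<beta>\<^sub>0(2) by (simp add: ac_simps)
  also have "\<dots> = (1 + \<i>) ^ (2 + k) * q" unfolding c(3) power_add by (simp only: mult.assoc)
  finally have shape: "\<exists>(a1::nat) (P::complex set) (e::complex \<Rightarrow> nat).
      finite P \<and> (\<forall>p\<in>P. gprime p \<and> p \<in> gOI) \<and> Y = (1 + \<i>) ^ (2 + a1) * (\<Prod>p\<in>P. p ^ e p)"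
    using c(2) unfolding gOI_prime_product_def by blast
  have nonzero: "X * Y * Z \<noteq> 0" "Z * Y * X \<noteq> 0"
    using nz u w c gunits_nonzero unfolding X_def Y_def Z_def by auto
  have cop_X: "gcd_unit X Y" and cop_Z: "gcd_unit Z Y"
    using gcd_unit_mult_units cop gcd_unit_third_coordinate[OF g eq _ cop] nz u w c
    unfolding X_def Y_def Z_def by auto
  \<comment> \<open>multiplying by units only changes the signs of the squares, by \<open>u\<^sup>2 c\<^sup>2\<close> and \<open>u\<^sup>2 w\<^sup>2\<close>\<close>
  have signs: "u\<^sup>2 * c\<^sup>2 \<in> {1, -1}" "u\<^sup>2 * w\<^sup>2 \<in> {1, -1}"
    using gunits_square[OF u(1)] gunits_square[OF c(1)] gunits_square[OF w(1)] by auto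
  have "c ^ 4 = 1" "w ^ 4 = 1" using c(1) w(1) by (simp_all add: gunits_power_4)
  then have "X\<^sup>2 + (u\<^sup>2 * c\<^sup>2) * \<i> * Y\<^sup>2 + (u\<^sup>2 * w\<^sup>2) * Z\<^sup>2 = u\<^sup>2 * (\<alpha>\<^sup>2 + \<i> * \<beta>\<^sup>2 + \<gamma>\<^sup>2)"
    unfolding X_def Y_def Z_def power_mult_distrib by (simp add: algebra_simps)
  then have sum: "X\<^sup>2 + (u\<^sup>2 * c\<^sup>2) * \<i> * Y\<^sup>2 + (u\<^sup>2 * w\<^sup>2) * Z\<^sup>2 = 0" using eq by simp
  have "gdvd ((1 + \<i>)\<^sup>2) Y" using even c(1) gunits_gauss unfolding Y_def by (simp add: gdvd_mult_left)
  then have "u\<^sup>2 * w\<^sup>2 = -1" using gOI_square_sign u(2) w(2) signs sum unfolding X_def Z_def by blast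
  with sum signs(1) consider "X\<^sup>2 + \<i> * Y\<^sup>2 = Z\<^sup>2" | "Z\<^sup>2 + \<i> * Y\<^sup>2 = X\<^sup>2"
    by (auto simp: algebra_simps add_eq_0_iff)
  then show ?thesis
  proof cases
    case 1
    then have "normalized_solution (u * \<alpha>) (c * \<beta>) (w * \<gamma>)"
      using u w shape nonzero cop_X unfolding normalized_solution_def X_def Y_def Z_def by blast
    then show ?thesis using u w c by blast
  next
    case 2
    then have "normalized_solution (w * \<gamma>) (c * \<beta>) (u * \<alpha>)"
      using u w shape nonzero cop_Z unfolding normalized_solution_def X_def Y_def Z_def by blast
    then show ?thesis using u w c by blast
  qed
qed

theorem theorem4p9:
  shows "(\<forall>\<alpha> \<beta> \<gamma>.
            gauss \<alpha> \<and> gauss \<beta> \<and> gauss \<gamma> \<and>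
            \<alpha>\<^sup>2 + \<i> * \<beta>\<^sup>2 + \<gamma>\<^sup>2 = 0 \<and> \<alpha> * \<beta> * \<gamma> \<noteq> 0 \<and>
            gcd_unit \<alpha> \<beta> \<and> gdvd ((1 + \<i>)\<^sup>2) \<beta> \<longrightarrow>
            (\<exists>u v w \<alpha>' \<gamma>'. u \<in> gunits \<and> v \<in> gunits \<and> w \<in> gunits \<and>
               (\<alpha>', \<gamma>') \<in> {(\<alpha>, \<gamma>), (\<gamma>, \<alpha>)} \<and>
               (let X = u * \<alpha>'; Y = v * \<beta>; Z = w * \<gamma>' in
                  X\<^sup>2 + \<i> * Y\<^sup>2 = Z\<^sup>2 \<and> X \<in> gOI \<and> Z \<in> gOI \<and>
                  (\<exists>(a1::nat) (P::complex set) (e::complex \<Rightarrow> nat).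
                     finite P \<and> (\<forall>p\<in>P. gprime p \<and> p \<in> gOI) \<and>
                     Y = (1 + \<i>) ^ (2 + a1) * (\<Prod>p\<in>P. p ^ e p)) \<and>
                  gcd_unit X Y \<and> X * Y * Z \<noteq> 0)))
       \<and>
       (\<forall>X Y Z.
            gauss X \<and> gauss Y \<and> gauss Z \<and>
            X\<^sup>2 + \<i> * Y\<^sup>2 = Z\<^sup>2 \<and> gcd_unit X Y \<and> X * Y * Z \<noteq> 0 \<longrightarrow>
            gauss (\<i> * Z) \<and> X\<^sup>2 + \<i> * Y\<^sup>2 + (\<i> * Z)\<^sup>2 = 0 \<and>
            gcd_unit X Y \<and> X * Y * (\<i> * Z) \<noteq> 0)"
proof (intro conjI allI impI)
  fix \<alpha> \<beta> \<gamma> :: complex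
  assume "gauss \<alpha> \<and> gauss \<beta> \<and> gauss \<gamma> \<and> \<alpha>\<^sup>2 + \<i> * \<beta>\<^sup>2 + \<gamma>\<^sup>2 = 0 \<and> \<alpha> * \<beta> * \<gamma> \<noteq> 0 \<and>
    gcd_unit \<alpha> \<beta> \<and> gdvd ((1 + \<i>)\<^sup>2) \<beta>"
  then obtain u v w \<alpha>' \<gamma>' where "u \<in> gunits" "v \<in> gunits" "w \<in> gunits"
      "(\<alpha>', \<gamma>') \<in> {(\<alpha>, \<gamma>), (\<gamma>, \<alpha>)}" "normalized_solution (u * \<alpha>') (v * \<beta>) (w * \<gamma>')"
    using normalized_solution_by_units by blast
  then show "\<exists>u v w \<alpha>' \<gamma>'. u \<in> gunits \<and> v \<in> gunits \<and> w \<in> gunits \<and>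
      (\<alpha>', \<gamma>') \<in> {(\<alpha>, \<gamma>), (\<gamma>, \<alpha>)} \<and>
      (let X = u * \<alpha>'; Y = v * \<beta>; Z = w * \<gamma>' in
         X\<^sup>2 + \<i> * Y\<^sup>2 = Z\<^sup>2 \<and> X \<in> gOI \<and> Z \<in> gOI \<and>
         (\<exists>(a1::nat) (P::complex set) (e::complex \<Rightarrow> nat).
            finite P \<and> (\<forall>p\<in>P. gprime p \<and> p \<in> gOI) \<and>
            Y = (1 + \<i>) ^ (2 + a1) * (\<Prod>p\<in>P. p ^ e p)) \<and>
         gcd_unit X Y \<and> X * Y * Z \<noteq> 0)"
    unfolding Let_def normalized_solution_def
    by (intro exI[of _ u] exI[of _ v] exI[of _ w] exI[of _ \<alpha>'] exI[of _ \<gamma>']) blast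
qed (simp_all add: power_mult_distrib)

end
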